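(* Let $k\ge 2$, $n\ge1$, and let $L_n$, $\varphi$ and the weight $w$ be as in the context. For all $\mathbf a,\mathbf b\in L_n$ with $a_1=0$ and $b_1=k-1$, we have $w(\varphi(\mathbf a))<w(\varphi(\mathbf b))$.
   Context: $E=\{0,\dots,k-1\}$. For $\mathbf a\in E^m$, $w(\mathbf a)=a_1+\dots+a_m$, and $\mathcal B_t=\{\mathbf a\in E^n: w(\mathbf a)=t\}$. Let $g=\lfloor n(k-1)/2\rfloor$ and $C_i=\{\mathbf a\in E^n: a_1=i\}$. Define $L_n=(\mathcal B_0\cup\dots\cup\mathcal B_g)\cap(C_0\cup C_{k-1})$ if $n(k-1)$ is odd, and $L_n=((\mathcal B_0\cup\dots\cup\mathcal B_{g-1})\cap(C_0\cup C_{k-1}))\cup(\mathcal B_g\cap C_0)$ if $n(k-1)$ is even. For $a\in E$ let $\overline a=k-1-a$. Define $\varphi:L_n\to E^{n-1}$ by $\varphi(a_1,\dots,a_n)=(a_2,\dots,a_n)$ if $a_1=0$ and $\varphi(a_1,\dots,a_n)=(\overline{a}_2,\dots,\overline{a}_n)$ if $a_1=k-1$. *)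

theory Defs
  imports Main
begin

text \<open>Words in E^m, E = {0,...,k-1}, are lists of length m with entries < k.
  The coordinate a_1 is a ! 0.\<close>

definition words :: "nat \<Rightarrow> nat \<Rightarrow> nat list set" where
  "words k m = {a. length a = m \<and> (\<forall>x\<in>set a. x < k)}"

definition wt :: "nat list \<Rightarrow> nat" where
  "wt a = sum_list a"

definition Blev :: "nat \<Rightarrow> nat \<Rightarrow> nat \<Rightarrow> nat list set" where
  "Blev k n t = {a \<in> words k n. wt a = t}"

definition gmid :: "nat \<Rightarrow> nat \<Rightarrow> nat" where
  "gmid k n = (n * (k - 1)) div 2"

definition Cfst :: "nat \<Rightarrow> nat \<Rightarrow> nat \<Rightarrow> nat list set" where
  "Cfst k n i = {a \<in> words k n. a ! 0 = i}"

definition Lset :: "nat \<Rightarrow> nat \<Rightarrow> nat list set" where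
  "Lset k n =
    (if odd (n * (k - 1))
     then (\<Union>t\<in>{0..gmid k n}. Blev k n t) \<inter> (Cfst k n 0 \<union> Cfst k n (k - 1))
     else ((\<Union>t\<in>{0..<gmid k n}. Blev k n t) \<inter> (Cfst k n 0 \<union> Cfst k n (k - 1)))
          \<union> (Blev k n (gmid k n) \<inter> Cfst k n 0))"

definition bar :: "nat \<Rightarrow> nat \<Rightarrow> nat" where
  "bar k a = k - 1 - a"

definition phi :: "nat \<Rightarrow> nat list \<Rightarrow> nat list" where
  "phi k a = (if a ! 0 = 0 then tl a else map (bar k) (tl a))"

end

theory Submission
  imports Defs
begin

text \<open>Complementation a \<mapsto> k - 1 - a turns weight w into (n - 1)(k - 1) - w on the tail, so
  \<phi> preserves the weight of a word starting with 0 and sends a word b starting with k - 1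
  to weight n(k - 1) - w(b). Both words lie in the lower half of the weight range, and the
  strict inequality comes from b: at odd n(k - 1) the middle level is not reached, and at even
  n(k - 1) the middle level is admitted in L_n only for words starting with 0.\<close>

lemma sum_list_map_bar:
  assumes "\<forall>x\<in>set xs. x < k"
  shows "sum_list (map (bar k) xs) = length xs * (k - 1) - sum_list xs"
proof -
  have "sum_list (map (bar k) xs) + sum_list xs = length xs * (k - 1)"
    using assms by (induction xs) (auto simp: bar_def)
  then show ?thesis by simp
qed

lemma sum_list_eq_nth_0_plus_tl: "xs \<noteq> [] \<Longrightarrow> sum_list xs = xs ! 0 + sum_list (tl xs)"
  by (cases xs) auto

lemma wt_phi_first_zero:
  assumes "a ! 0 = 0"
  shows "wt (phi k a) = wt a"
  using assms sum_list_eq_nth_0_plus_tl[of a] by (cases "a = []") (simp_all add: phi_def wt_def)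

lemma wt_phi_first_top:
  assumes "b \<in> words k n" and "n \<ge> 1" and "b ! 0 = k - 1"
  shows "wt (phi k b) = n * (k - 1) - wt b"
proof -
  have "b \<noteq> []" using assms(1,2) by (auto simp: words_def)
  then have wt_b: "wt b = (k - 1) + sum_list (tl b)"
    using assms(3) sum_list_eq_nth_0_plus_tl[OF \<open>b \<noteq> []\<close>] by (simp add: wt_def)
  have tl_b: "length (tl b) = n - 1" "\<forall>x\<in>set (tl b). x < k"
    using assms(1) \<open>b \<noteq> []\<close> by (cases b; auto simp: words_def)+
  have "n * (k - 1) = (n - 1) * (k - 1) + (k - 1)"
    using assms(2) by (metis Suc_diff_1 add.commute less_le_trans mult_Suc zero_less_one)
  then show ?thesis
    using wt_b sum_list_map_bar[OF tl_b(2)] tl_b assms(3)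
    by (cases "k - 1 = 0") (auto simp: phi_def wt_def)
qed

lemma Lset_subset_words: "Lset k n \<subseteq> words k n"
  by (auto simp: Lset_def Blev_def)

lemma Lset_double_wt_le: "a \<in> Lset k n \<Longrightarrow> 2 * wt a \<le> n * (k - 1)"
  by (auto simp: Lset_def Blev_def gmid_def split: if_splits)

lemma Lset_double_wt_less:
  assumes "b \<in> Lset k n" and "b ! 0 \<noteq> 0"
  shows "2 * wt b < n * (k - 1)"
proof (cases "odd (n * (k - 1))")
  case True
  then have "2 * (n * (k - 1) div 2) < n * (k - 1)"
    using odd_two_times_div_two_nat[OF True] odd_pos[OF True] by linarith
  moreover have "wt b \<le> n * (k - 1) div 2"
    using assms(1) True by (auto simp: Lset_def Blev_def gmid_def)
  ultimately show ?thesis by linarith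
next
  case False
  then show ?thesis
    using assms by (auto simp: Lset_def Blev_def Cfst_def gmid_def elim!: evenE)
qed

theorem lemma1:
  fixes k n :: nat and a b :: "nat list"
  assumes "k \<ge> 2" and "n \<ge> 1"
    and "a \<in> Lset k n" and "b \<in> Lset k n"
    and "a ! 0 = 0" and "b ! 0 = k - 1"
  shows "wt (phi k a) < wt (phi k b)"
proof -
  have "wt a + wt b < n * (k - 1)"
    using Lset_double_wt_le[OF assms(3)] Lset_double_wt_less[OF assms(4)] assms(1,6) by simp
  moreover have "wt (phi k b) = n * (k - 1) - wt b"
    using wt_phi_first_top Lset_subset_words assms(2,4,6) by blast
  ultimately show ?thesis
    using wt_phi_first_zero[OF assms(5)] by simp
qed

end
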